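(* Let $\mathcal{B}$ be a Boolean control network. If $\mathcal{B}$ is online observable, then $\mathcal{B}$ satisfies Type-I observability.
   Context: $\mathbb{B}=\{0,1\}$. A BCN has inputs $\mathcal{I}=\mathbb{B}^\ell$, states $\mathcal{S}=\mathbb{B}^m$, outputs $\mathcal{O}=\mathbb{B}^n$ and updating rules $\sigma:\mathcal{I}\times\mathcal{S}\to\mathcal{S}$, $\rho:\mathcal{S}\to\mathcal{O}$, with $\mathsf{s}(t+1)=\sigma(\mathsf{i}(t),\mathsf{s}(t))$, $\mathsf{o}(t)=\rho(\mathsf{s}(t))$. For a state $\mathsf{s}$ and input sequence $\mathsf{I}=\mathsf{i}(0)\ldots\mathsf{i}(t)$, $H^{[0,t]}(\mathsf{s},\mathsf{I})=\mathsf{o}(0)\ldots\mathsf{o}(t+1)$ is the output sequence of the run with $\mathsf{s}(0)=\mathsf{s}$. Type-I observability: for every state $\mathsf{s}$ there exists an input sequence $\mathsf{I}=\mathsf{i}(0)\ldots\mathsf{i}(t)$ such that $H^{[0,t]}(\mathsf{s}',\mathsf{I})\ne H^{[0,t]}(\mathsf{s},\mathsf{I})$ for all states $\mathsf{s}'\ne\mathsf{s}$. Online observability: with $\varepsilon$ denoting empty input/output, let $\xi(\mathsf{i},\mathsf{s})=\sigma(\mathsf{i},\mathsf{s})$ for $\mathsf{i}\ne\varepsilon$, $\xi(\varepsilon,\mathsf{s})=\mathsf{s}$; for $\mathsf{S}\subseteq\mathcal{S}$, $\zeta(\mathsf{S},\mathsf{i},\mathsf{o})=\{\xi(\mathsf{i},\mathsf{s}):\mathsf{s}\in\mathsf{S},\rho(\xi(\mathsf{i},\mathsf{s}))=\mathsf{o}\}$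 if $\mathsf{o}\ne\varepsilon$ and $\zeta(\mathsf{S},\mathsf{i},\varepsilon)=\{\xi(\mathsf{i},\mathsf{s}):\mathsf{s}\in\mathsf{S}\}$. For nonempty $\mathsf{S}$: $P_0(\mathsf{S})$ iff $|\mathsf{S}|=1$; $P_{n+1}(\mathsf{S})$ iff $|\mathsf{S}|=1$ or there is $\mathsf{i}\in\mathcal{I}$ with $|\zeta(\mathsf{S},\mathsf{i},\varepsilon)|=|\mathsf{S}|$ such that every nonempty $\zeta(\mathsf{S},\mathsf{i},\mathsf{o})$, $\mathsf{o}\in\mathcal{O}$, satisfies $P_n$. $\Gamma(\mathsf{S})$ is the least $n$ with $P_n(\mathsf{S})$, or $\infty$ if none. The BCN is online observable if $\Gamma(\zeta(\mathcal{S},\varepsilon,\mathsf{o}))\ne\infty$ for every $\mathsf{o}\in\mathcal{O}$ with $\zeta(\mathcal{S},\varepsilon,\mathsf{o})\ne\emptyset$. *)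

theory Defs
  imports "HOL-Analysis.Finite_Cartesian_Product" "HOL-Library.Extended_Nat"
begin

text \<open>A Boolean control network (BCN) is given by its updating rules
  sigma :: input => state => state and rho :: state => output, where
  inputs are bool^'l, states bool^'m, outputs bool^'n.\<close>

fun state_seq :: "('i \<Rightarrow> 's \<Rightarrow> 's) \<Rightarrow> 's \<Rightarrow> 'i list \<Rightarrow> 's list" where
  "state_seq \<sigma> s [] = [s]"
| "state_seq \<sigma> s (i # is) = s # state_seq \<sigma> (\<sigma> i s) is"

definition H :: "('i \<Rightarrow> 's \<Rightarrow> 's) \<Rightarrow> ('s \<Rightarrow> 'o) \<Rightarrow> 's \<Rightarrow> 'i list \<Rightarrow> 'o list" where
  "H \<sigma> \<rho> s I = map \<rho> (state_seq \<sigma> s I)"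

definition typeI_observable :: "('i \<Rightarrow> 's \<Rightarrow> 's) \<Rightarrow> ('s \<Rightarrow> 'o) \<Rightarrow> bool" where
  "typeI_observable \<sigma> \<rho> \<longleftrightarrow>
     (\<forall>s. \<exists>I. I \<noteq> [] \<and> (\<forall>s'. s' \<noteq> s \<longrightarrow> H \<sigma> \<rho> s' I \<noteq> H \<sigma> \<rho> s I))"

text \<open>The empty input/output epsilon is modelled by None.\<close>
definition xi :: "('i \<Rightarrow> 's \<Rightarrow> 's) \<Rightarrow> 'i option \<Rightarrow> 's \<Rightarrow> 's" where
  "xi \<sigma> i s = (case i of None \<Rightarrow> s | Some i' \<Rightarrow> \<sigma> i' s)"

definition zeta :: "('i \<Rightarrow> 's \<Rightarrow> 's) \<Rightarrow> ('s \<Rightarrow> 'o) \<Rightarrow> 's set \<Rightarrow> 'i option \<Rightarrow> 'o option \<Rightarrow> 's set" where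
  "zeta \<sigma> \<rho> S i ob = (case ob of
       None \<Rightarrow> {xi \<sigma> i s | s. s \<in> S}
     | Some o' \<Rightarrow> {xi \<sigma> i s | s. s \<in> S \<and> \<rho> (xi \<sigma> i s) = o'})"

fun P :: "('i \<Rightarrow> 's \<Rightarrow> 's) \<Rightarrow> ('s \<Rightarrow> 'o) \<Rightarrow> nat \<Rightarrow> 's set \<Rightarrow> bool" where
  "P \<sigma> \<rho> 0 S \<longleftrightarrow> card S = 1"
| "P \<sigma> \<rho> (Suc n) S \<longleftrightarrow> card S = 1 \<or>
     (\<exists>i. card (zeta \<sigma> \<rho> S (Some i) None) = card S \<and>
          (\<forall>ob. zeta \<sigma> \<rho> S (Some i) (Some ob) \<noteq> {} \<longrightarrow> P \<sigma> \<rho> n (zeta \<sigma> \<rho> S (Some i) (Some ob))))"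

definition Gamma :: "('i \<Rightarrow> 's \<Rightarrow> 's) \<Rightarrow> ('s \<Rightarrow> 'o) \<Rightarrow> 's set \<Rightarrow> enat" where
  "Gamma \<sigma> \<rho> S = (if \<exists>n. P \<sigma> \<rho> n S then enat (LEAST n. P \<sigma> \<rho> n S) else \<infinity>)"

definition online_observable :: "('i \<Rightarrow> 's \<Rightarrow> 's) \<Rightarrow> ('s \<Rightarrow> 'o) \<Rightarrow> bool" where
  "online_observable \<sigma> \<rho> \<longleftrightarrow>
     (\<forall>ob. zeta \<sigma> \<rho> UNIV None (Some ob) \<noteq> {} \<longrightarrow> Gamma \<sigma> \<rho> (zeta \<sigma> \<rho> UNIV None (Some ob)) \<noteq> \<infinity>)"

end

theory Submission
  imports Defs
begin

text \<open>If the refinement predicate \<open>P n S\<close> holds, then every state of \<open>S\<close> can be told apart from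
  all other states of \<open>S\<close> by one input sequence: pick the input \<open>i\<close> witnessing \<open>P\<close>; it is injective
  on \<open>S\<close>, so two states of \<open>S\<close> either already differ in the next output or are mapped to distinct
  states of the same refined class, which the induction hypothesis separates.  Online observability
  yields \<open>P n S\<close> for every output class \<open>S\<close>, and states in different classes differ in
  their first output, so every state is distinguished from all others.\<close>

definition distinguishes ::
  "('i \<Rightarrow> 's \<Rightarrow> 's) \<Rightarrow> ('s \<Rightarrow> 'o) \<Rightarrow> 's set \<Rightarrow> 's \<Rightarrow> 'i list \<Rightarrow> bool" where
  "distinguishes \<sigma> \<rho> S s I \<longleftrightarrow> (\<forall>s'\<in>S. s' \<noteq> s \<longrightarrow> H \<sigma> \<rho> s' I \<noteq> H \<sigma> \<rho> s I)"

lemma H_Cons: "H \<sigma> \<rho> s (i # I) = \<rho> s # H \<sigma> \<rho> (\<sigma> i s) I"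
  by (simp add: H_def)

lemma hd_H: "hd (H \<sigma> \<rho> s I) = \<rho> s"
  by (cases I) (simp_all add: H_def)

lemma H_neq_if_output_neq: "\<rho> s \<noteq> \<rho> s' \<Longrightarrow> H \<sigma> \<rho> s I \<noteq> H \<sigma> \<rho> s' I"
  by (metis hd_H)

lemma take_H_append: "take (Suc (length I)) (H \<sigma> \<rho> s (I @ J)) = H \<sigma> \<rho> s I"
proof (induction I arbitrary: s)
  case Nil
  show ?case by (cases J) (simp_all add: H_def)
next
  case (Cons i I)
  then show ?case by (simp add: H_Cons)
qed

lemma H_append_neq:
  assumes "H \<sigma> \<rho> s I \<noteq> H \<sigma> \<rho> s' I"
  shows "H \<sigma> \<rho> s (I @ J) \<noteq> H \<sigma> \<rho> s' (I @ J)"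
proof
  assume "H \<sigma> \<rho> s (I @ J) = H \<sigma> \<rho> s' (I @ J)"
  then have "take (Suc (length I)) (H \<sigma> \<rho> s (I @ J)) = take (Suc (length I)) (H \<sigma> \<rho> s' (I @ J))"
    by simp
  with assms show False by (simp only: take_H_append)
qed

lemma distinguishes_append:
  "distinguishes \<sigma> \<rho> S s I \<Longrightarrow> distinguishes \<sigma> \<rho> S s (I @ J)"
  unfolding distinguishes_def by (simp add: H_append_neq)

lemma distinguishes_singleton: "distinguishes \<sigma> \<rho> {s} s I"
  by (simp add: distinguishes_def)

lemma zeta_Some_None: "zeta \<sigma> \<rho> S (Some i) None = \<sigma> i ` S"
  by (auto simp: zeta_def xi_def)

lemma zeta_Some_Some:
  "zeta \<sigma> \<rho> S (Some i) (Some ob) = {x \<in> \<sigma> i ` S. \<rho> x = ob}"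
  by (auto simp: zeta_def xi_def)

lemma zeta_None_UNIV: "zeta \<sigma> \<rho> UNIV None (Some ob) = {x. \<rho> x = ob}"
  by (auto simp: zeta_def xi_def)

lemma distinguishes_Cons:
  assumes "inj_on (\<sigma> i) S" and "s \<in> S"
    and "distinguishes \<sigma> \<rho> (zeta \<sigma> \<rho> S (Some i) (Some (\<rho> (\<sigma> i s)))) (\<sigma> i s) I"
  shows "distinguishes \<sigma> \<rho> S s (i # I)"
  unfolding distinguishes_def
proof (intro ballI impI)
  fix s' assume "s' \<in> S" "s' \<noteq> s"
  show "H \<sigma> \<rho> s' (i # I) \<noteq> H \<sigma> \<rho> s (i # I)"
  proof (cases "\<rho> (\<sigma> i s') = \<rho> (\<sigma> i s)")
    case True
    with \<open>s' \<in> S\<close> have "\<sigma> i s' \<in> zeta \<sigma> \<rho> S (Some i) (Some (\<rho> (\<sigma> i s)))"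
      by (simp add: zeta_Some_Some)
    moreover have "\<sigma> i s' \<noteq> \<sigma> i s"
      using assms(1,2) \<open>s' \<in> S\<close> \<open>s' \<noteq> s\<close> by (meson inj_on_def)
    ultimately show ?thesis
      using assms(3) by (simp add: distinguishes_def H_Cons)
  next
    case False
    then show ?thesis by (simp add: H_Cons H_neq_if_output_neq)
  qed
qed

lemma P_imp_distinguishes:
  assumes "P \<sigma> \<rho> n S" and "finite S" and "s \<in> S"
  shows "\<exists>I. distinguishes \<sigma> \<rho> S s I"
  using assms
proof (induction n arbitrary: S s)
  case 0
  then have "S = {s}" by (auto simp: card_1_singleton_iff)
  then show ?case by (simp add: distinguishes_singleton)
next
  case (Suc n)
  show ?case
  proof (cases "card S = 1")
    case True
    with Suc.prems(3) have "S = {s}" by (auto simp: card_1_singleton_iff)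
    then show ?thesis by (simp add: distinguishes_singleton)
  next
    case False
    with Suc.prems(1) obtain i where
      card_eq: "card (\<sigma> i ` S) = card S" and
      refine: "\<forall>ob. zeta \<sigma> \<rho> S (Some i) (Some ob) \<noteq> {} \<longrightarrow>
                   P \<sigma> \<rho> n (zeta \<sigma> \<rho> S (Some i) (Some ob))"
      by (auto simp: zeta_Some_None)
    define S' where "S' = zeta \<sigma> \<rho> S (Some i) (Some (\<rho> (\<sigma> i s)))"
    have "\<sigma> i s \<in> S'" using Suc.prems(3) by (simp add: S'_def zeta_Some_Some)
    moreover have "finite S'" using Suc.prems(2) by (simp add: S'_def zeta_Some_Some)
    moreover from \<open>\<sigma> i s \<in> S'\<close> refine have "P \<sigma> \<rho> n S'" unfolding S'_def by blast
    ultimately obtain I where "distinguishes \<sigma> \<rho> S' (\<sigma> i s) I"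
      using Suc.IH by blast
    moreover have "inj_on (\<sigma> i) S"
      using Suc.prems(2) card_eq by (rule eq_card_imp_inj_on)
    ultimately have "distinguishes \<sigma> \<rho> S s (i # I)"
      using Suc.prems(3) unfolding S'_def by (intro distinguishes_Cons)
    then show ?thesis ..
  qed
qed

lemma Gamma_neq_infinity_imp_P: "Gamma \<sigma> \<rho> S \<noteq> \<infinity> \<Longrightarrow> \<exists>n. P \<sigma> \<rho> n S"
  by (auto simp: Gamma_def split: if_splits)

lemma distinguishes_output_class_imp_UNIV:
  "distinguishes \<sigma> \<rho> {x. \<rho> x = \<rho> s} s I \<Longrightarrow> distinguishes \<sigma> \<rho> UNIV s I"
  unfolding distinguishes_def by (metis (mono_tags) H_neq_if_output_neq mem_Collect_eq)

theorem lemma3: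
  fixes \<sigma> :: "bool^'l \<Rightarrow> bool^'m \<Rightarrow> bool^'m" and \<rho> :: "bool^'m \<Rightarrow> bool^'n"
  assumes "online_observable \<sigma> \<rho>"
  shows "typeI_observable \<sigma> \<rho>"
  unfolding typeI_observable_def
proof
  fix s
  let ?S = "{x. \<rho> x = \<rho> s}"
  have "Gamma \<sigma> \<rho> ?S \<noteq> \<infinity>"
    using assms by (auto simp: online_observable_def zeta_None_UNIV)
  then obtain n where "P \<sigma> \<rho> n ?S" using Gamma_neq_infinity_imp_P by blast
  then obtain I where "distinguishes \<sigma> \<rho> ?S s I"
    using P_imp_distinguishes[of \<sigma> \<rho> n ?S s] by auto
  \<comment> \<open>the appended input is arbitrary; it only makes the sequence nonempty\<close>
  then have "distinguishes \<sigma> \<rho> UNIV s (I @ [undefined])"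
    by (intro distinguishes_append distinguishes_output_class_imp_UNIV)
  then show "\<exists>I. I \<noteq> [] \<and> (\<forall>s'. s' \<noteq> s \<longrightarrow> H \<sigma> \<rho> s' I \<noteq> H \<sigma> \<rho> s I)"
    unfolding distinguishes_def by (intro exI[of _ "I @ [undefined]"]) simp
qed

end
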